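(* Every total strongly polynomial-time computable functional $F\colon\mathcal B\to\mathcal B$ is polynomial-time computable.
   Context: $\Sigma=\{0,1\}$, $\mathcal B=(\Sigma^* )^{\Sigma^*}$ is the set of total string functions. An oracle Turing machine $M^?$ with oracle $\varphi$ replaces, upon entering its query state, the query-tape content $\mathbf b$ by $\varphi(\mathbf b)$ in one time step; $\operatorname{time}_{M^\varphi}(\mathbf a)\in\mathbb N\cup\{\infty\}$ is its number of steps on input $\mathbf a$. $M^?$ computes $F$ if $M^\varphi=F(\varphi)$ for all $\varphi\in\mathcal B$. Size function: $|\varphi|(n)=\max\{|\varphi(\mathbf a)|:|\mathbf a|\le n\}$. Second-order polynomials: smallest class of functions $\mathbb N^{\mathbb N}\times\mathbb N\to\mathbb N$ containing $(l,n)\mapsto p(n)$ for polynomials $p$ with natural coefficients, closed under pointwise sum, product and $P\mapsto P^+$, $P^+(l,n)=l(P(l,n))$. $F$ is polynomial-time computable if computed by a machine with $\operatorname{time}_{M^\varphi}(\mathbf a)\le P(|\varphi|,|\mathbf a|)$ for all $\varphi,\mathbf a$ for some second-order polynomial $P$. Length revision function: for oracle $\varphi$ and input $\mathbf a$, let $\mathbf b_k$ be the content of the oracle answer tape at step $k$; $o_{\varphi,\mathbf a}(0)=|\mathbf a|$, $o_{\varphi,\mathbf a}(n+1)=\max\{o_{\varphi,\mathbf a}(n),|\mathbf b_{n+1}|\}$. A function $t\colon\mathbb N\to\mathbb N$ is a step-count for $M^?$ if for all $\varphi\in\mathcal B$, $\mathbf a\in\Sigma^*$ and all $n\le\operatorname{time}_{M^\varphi}(\mathbf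 a)$: $n\le t(o_{\varphi,\mathbf a}(n))$. $M^?$ has finite length-revision if there is $N\in\mathbb N$ with $\#o_{\varphi,\mathbf a}(\mathbb N)\le N$ for all $\varphi\in\mathcal B$, $\mathbf a\in\Sigma^*$ (where $o_{\varphi,\mathbf a}(\mathbb N)$ is the image of $o_{\varphi,\mathbf a}$). $F$ is strongly polynomial-time computable if it is computed by an oracle machine having finite length-revision and a polynomial step-count. *)

theory Defs
  imports Main "HOL-Library.Extended_Nat" "HOL-Computational_Algebra.Polynomial"
begin

(* Sigma = {0,1} is rendered as bool (False = 0, True = 1); Sigma^* = bool list *)
type_synonym word = "bool list"
type_synonym orcl = "word \<Rightarrow> word"

(* Tape symbols are natural numbers: 0 = blank, 1 = bit 0, 2 = bit 1; a machine
   uses only symbols < otm_nsyms.  A machine has otm_ntapes >= 4 tapes: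
   tape 0 = input tape, tape 1 = orcl query tape, tape 2 = orcl answer tape
   (written only by the orcl), tape 3 = output tape, further tapes = work tapes. *)
record otm =
  otm_ntapes :: nat
  otm_nstates :: nat
  otm_nsyms :: nat
  otm_start :: nat
  otm_halt :: nat
  otm_query :: nat
  otm_answer :: nat
  otm_delta :: "nat \<Rightarrow> nat list \<Rightarrow> nat \<times> nat list \<times> int list"

definition wf_otm :: "otm \<Rightarrow> bool" where
  "wf_otm M \<longleftrightarrow> otm_ntapes M \<ge> 4 \<and> otm_nsyms M \<ge> 3 \<and>
     otm_start M < otm_nstates M \<and> otm_halt M < otm_nstates M \<and>
     otm_query M < otm_nstates M \<and> otm_answer M < otm_nstates M \<and>
     otm_query M \<noteq> otm_halt M \<and>
     (\<forall>q rs. q < otm_nstates M \<and> length rs = otm_ntapes M \<and> (\<forall>s\<in>set rs. s < otm_nsyms M) \<longrightarrow>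
        (case otm_delta M q rs of (q', ws, ms) \<Rightarrow>
           q' < otm_nstates M \<and> length ws = otm_ntapes M \<and> (\<forall>s\<in>set ws. s < otm_nsyms M) \<and>
           length ms = otm_ntapes M \<and> (\<forall>m\<in>set ms. m \<in> {-1, 0, 1})))"

record config =
  cf_state :: nat
  cf_tapes :: "(int \<Rightarrow> nat) list"
  cf_heads :: "int list"

definition tape_word :: "(int \<Rightarrow> nat) \<Rightarrow> word" where
  "tape_word T = map (\<lambda>i. T (int i) = 2) [0..< (LEAST i. T (int i) \<notin> {1, 2})]"

definition put_word :: "word \<Rightarrow> (int \<Rightarrow> nat)" where
  "put_word w = (\<lambda>i. if 0 \<le> i \<and> nat i < length w then (if w ! nat i then 2 else 1) else 0)"

definition init_config :: "otm \<Rightarrow> word \<Rightarrow> config" where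
  "init_config M a = \<lparr> cf_state = otm_start M,
     cf_tapes = put_word a # replicate (otm_ntapes M - 1) (\<lambda>_. 0),
     cf_heads = replicate (otm_ntapes M) 0 \<rparr>"

definition otm_step :: "otm \<Rightarrow> orcl \<Rightarrow> config \<Rightarrow> config" where
  "otm_step M \<phi> c =
    (if cf_state c = otm_halt M then c
     else if cf_state c = otm_query M then
       \<lparr> cf_state = otm_answer M,
         cf_tapes = (cf_tapes c)[2 := put_word (\<phi> (tape_word (cf_tapes c ! 1)))],
         cf_heads = (cf_heads c)[2 := 0] \<rparr>
     else
       (let rs = map (\<lambda>j. (cf_tapes c ! j) (cf_heads c ! j)) [0..<otm_ntapes M] in
        case otm_delta M (cf_state c) rs of (q', ws, ms) \<Rightarrow>
        \<lparr> cf_state = q',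
          cf_tapes = map (\<lambda>j. if j = 2 then cf_tapes c ! j
                               else (cf_tapes c ! j)(cf_heads c ! j := ws ! j)) [0..<otm_ntapes M],
          cf_heads = map (\<lambda>j. cf_heads c ! j + ms ! j) [0..<otm_ntapes M] \<rparr>))"

definition otm_run :: "otm \<Rightarrow> orcl \<Rightarrow> word \<Rightarrow> nat \<Rightarrow> config" where
  "otm_run M \<phi> a k = (otm_step M \<phi> ^^ k) (init_config M a)"

definition otm_time :: "otm \<Rightarrow> orcl \<Rightarrow> word \<Rightarrow> enat" where
  "otm_time M \<phi> a =
    (if \<exists>k. cf_state (otm_run M \<phi> a k) = otm_halt M
     then enat (LEAST k. cf_state (otm_run M \<phi> a k) = otm_halt M) else \<infinity>)"

definition otm_output :: "otm \<Rightarrow> orcl \<Rightarrow> word \<Rightarrow> word" where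
  "otm_output M \<phi> a = tape_word (cf_tapes (otm_run M \<phi> a (the_enat (otm_time M \<phi> a))) ! 3)"

definition otm_computes :: "otm \<Rightarrow> (orcl \<Rightarrow> orcl) \<Rightarrow> bool" where
  "otm_computes M F \<longleftrightarrow> (\<forall>\<phi> a. otm_time M \<phi> a \<noteq> \<infinity> \<and> otm_output M \<phi> a = F \<phi> a)"

definition size_fun :: "orcl \<Rightarrow> nat \<Rightarrow> nat" where
  "size_fun \<phi> n = Max {length (\<phi> a) | a. length a \<le> n}"

inductive sopoly :: "((nat \<Rightarrow> nat) \<Rightarrow> nat \<Rightarrow> nat) \<Rightarrow> bool" where
  const_poly: "sopoly (\<lambda>l n. poly p n)" for p :: "nat poly"
| add: "sopoly P \<Longrightarrow> sopoly Q \<Longrightarrow> sopoly (\<lambda>l n. P l n + Q l n)"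
| mult: "sopoly P \<Longrightarrow> sopoly Q \<Longrightarrow> sopoly (\<lambda>l n. P l n * Q l n)"
| app: "sopoly P \<Longrightarrow> sopoly (\<lambda>l n. l (P l n))"

definition poly_time_computable :: "(orcl \<Rightarrow> orcl) \<Rightarrow> bool" where
  "poly_time_computable F \<longleftrightarrow>
     (\<exists>M P. wf_otm M \<and> otm_computes M F \<and> sopoly P \<and>
        (\<forall>\<phi> a. otm_time M \<phi> a \<le> enat (P (size_fun \<phi>) (length a))))"

fun length_rev :: "otm \<Rightarrow> orcl \<Rightarrow> word \<Rightarrow> nat \<Rightarrow> nat" where
  "length_rev M \<phi> a 0 = length a"
| "length_rev M \<phi> a (Suc n) =
     max (length_rev M \<phi> a n) (length (tape_word (cf_tapes (otm_run M \<phi> a (Suc n)) ! 2)))"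

definition step_count :: "otm \<Rightarrow> (nat \<Rightarrow> nat) \<Rightarrow> bool" where
  "step_count M t \<longleftrightarrow>
     (\<forall>\<phi> a n. enat n \<le> otm_time M \<phi> a \<longrightarrow> n \<le> t (length_rev M \<phi> a n))"

definition finite_length_revision :: "otm \<Rightarrow> bool" where
  "finite_length_revision M \<longleftrightarrow>
     (\<exists>N::nat. \<forall>\<phi> a. finite (range (length_rev M \<phi> a)) \<and> card (range (length_rev M \<phi> a)) \<le> N)"

definition strongly_poly_time_computable :: "(orcl \<Rightarrow> orcl) \<Rightarrow> bool" where
  "strongly_poly_time_computable F \<longleftrightarrow>
     (\<exists>M t. wf_otm M \<and> otm_computes M F \<and> finite_length_revision M \<and>
        (\<exists>p::nat poly. t = poly p) \<and> step_count M t)"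

end

theory Submission
  imports Defs
begin

text \<open>After \<open>k\<close> steps the query tape holds a word of length at most \<open>k\<close>, so every oracle
  answer seen so far has length at most \<open>|\<phi>|(k)\<close>.  Hence whenever the length revision function
  increases at step \<open>n + 1\<close>, its new value is at most \<open>|\<phi>|(n + 1)\<close>, while the polynomial
  step-count \<open>p\<close> bounds \<open>n\<close> by \<open>p\<close> of the previous value.  Iterating \<open>Q\<^sub>0 = |a|\<close>,
  \<open>Q\<^sub>i\<^sub>+\<^sub>1 = Q\<^sub>i + |\<phi>|(p(Q\<^sub>i) + 1)\<close> over the at most \<open>N\<close> revisions therefore bounds the
  revision function by the second-order polynomial \<open>Q\<^sub>N\<close>, and the running time by \<open>p(Q\<^sub>N)\<close>.\<close>

lemma tape_word_length_le: "T (int k) = 0 \<Longrightarrow> length (tape_word T) \<le> k"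
  unfolding tape_word_def by (simp add: Least_le)

lemma tape_word_put_word: "tape_word (put_word w) = w"
proof -
  have "(LEAST i. put_word w (int i) \<notin> {1, 2}) = length w"
    by (rule Least_equality) (auto simp: put_word_def not_le split: if_splits)
  then show ?thesis
    unfolding tape_word_def by (intro nth_equalityI) (auto simp: put_word_def)
qed

lemma put_word_le_2: "put_word w i \<le> 2"
  by (simp add: put_word_def)

lemma finite_lengths_on_bounded_words:
  fixes \<phi> :: "'a::finite list \<Rightarrow> 'b list"
  shows "finite {length (\<phi> a) | a. length a \<le> n}"
proof -
  have "{length (\<phi> a) | a. length a \<le> n} = (\<lambda>a. length (\<phi> a)) ` {a. length a \<le> n}"
    by auto
  then show ?thesis
    using finite_lists_length_le[of "UNIV :: 'a set" n] by simp
qed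

lemma length_le_size_fun: "length a \<le> n \<Longrightarrow> length (\<phi> a) \<le> size_fun \<phi> n"
  unfolding size_fun_def by (rule Max_ge[OF finite_lengths_on_bounded_words]) auto

lemma mono_size_fun: "mono (size_fun \<phi>)"
proof (rule monoI)
  fix m n :: nat
  assume "m \<le> n"
  then have "{length (\<phi> a) | a. length a \<le> m} \<subseteq> {length (\<phi> a) | a. length a \<le> n}"
    by auto
  moreover have "length (\<phi> []) \<in> {length (\<phi> a) | a. length a \<le> m}"
    by auto
  ultimately show "size_fun \<phi> m \<le> size_fun \<phi> n"
    unfolding size_fun_def by (intro Max_mono finite_lengths_on_bounded_words) auto
qed

lemma mono_poly_nat: "mono (poly (p :: nat poly))"
proof (rule monoI)
  show "x \<le> y \<Longrightarrow> poly p x \<le> poly p y" for x y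
    by (induction p rule: pCons_induct) (auto intro: add_mono mult_mono)
qed

definition wf_config :: "otm \<Rightarrow> config \<Rightarrow> bool" where
  "wf_config M c \<longleftrightarrow> cf_state c < otm_nstates M \<and>
     length (cf_tapes c) = otm_ntapes M \<and> length (cf_heads c) = otm_ntapes M \<and>
     (\<forall>j<otm_ntapes M. \<forall>i. (cf_tapes c ! j) i < otm_nsyms M)"

lemma wf_config_init_config: "wf_otm M \<Longrightarrow> wf_config M (init_config M a)"
  using put_word_le_2[of a]
  by (fastforce simp: wf_otm_def wf_config_def init_config_def nth_Cons split: nat.split
      intro: le_less_trans)

lemma wf_otm_delta:
  assumes M: "wf_otm M" and q: "q < otm_nstates M"
    and rs: "length rs = otm_ntapes M" "\<forall>s\<in>set rs. s < otm_nsyms M"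
    and \<delta>: "otm_delta M q rs = (q', ws, ms)"
  shows "q' < otm_nstates M" "length ws = otm_ntapes M" "\<forall>s\<in>set ws. s < otm_nsyms M"
    "length ms = otm_ntapes M" "\<forall>m\<in>set ms. m \<in> {-1, 0, 1}"
  using M q rs \<delta> unfolding wf_otm_def by (auto dest!: spec[of _ q] spec[of _ rs])

abbreviation scanned :: "otm \<Rightarrow> config \<Rightarrow> nat list" where
  "scanned M c \<equiv> map (\<lambda>j. (cf_tapes c ! j) (cf_heads c ! j)) [0..<otm_ntapes M]"

lemma scanned_lt_nsyms: "wf_config M c \<Longrightarrow> \<forall>s\<in>set (scanned M c). s < otm_nsyms M"
  by (auto simp: wf_config_def)

lemma wf_config_otm_step:
  assumes M: "wf_otm M" and c: "wf_config M c"
  shows "wf_config M (otm_step M \<phi> c)"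
proof -
  obtain q' ws ms where \<delta>: "otm_delta M (cf_state c) (scanned M c) = (q', ws, ms)"
    by (metis prod_cases3)
  have ws: "q' < otm_nstates M" "length ws = otm_ntapes M" "\<forall>s\<in>set ws. s < otm_nsyms M"
    using wf_otm_delta[OF M _ _ scanned_lt_nsyms[OF c] \<delta>] c
    by (simp_all add: wf_config_def)
  consider "cf_state c = otm_halt M" | "cf_state c = otm_query M"
    | "cf_state c \<noteq> otm_halt M" "cf_state c \<noteq> otm_query M"
    by blast
  then show ?thesis
  proof cases
    case 1
    then show ?thesis using c by (simp add: otm_step_def)
  next
    case 2
    have "put_word w i < otm_nsyms M" for w i
      using M put_word_le_2[of w i] by (simp add: wf_otm_def)
    moreover have "otm_answer M < otm_nstates M" "otm_ntapes M \<ge> 4"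
      using M by (simp_all add: wf_otm_def)
    ultimately show ?thesis
      using 2 c by (auto simp: otm_step_def wf_config_def nth_list_update)
  next
    case 3
    then show ?thesis
      using c ws \<delta> by (auto simp: otm_step_def wf_config_def Let_def)
  qed
qed

lemma otm_step_regular:
  assumes M: "wf_otm M" and c: "wf_config M c"
    and "cf_state c \<noteq> otm_halt M" "cf_state c \<noteq> otm_query M"
  obtains w where "cf_tapes (otm_step M \<phi> c) ! 1 = (cf_tapes c ! 1)(cf_heads c ! 1 := w)"
    and "cf_heads (otm_step M \<phi> c) ! 1 \<le> cf_heads c ! 1 + 1"
    and "cf_tapes (otm_step M \<phi> c) ! 2 = cf_tapes c ! 2"
proof -
  obtain q' ws ms where \<delta>: "otm_delta M (cf_state c) (scanned M c) = (q', ws, ms)"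
    by (metis prod_cases3)
  have ms: "length ms = otm_ntapes M" "\<forall>m\<in>set ms. m \<in> {-1, 0, 1}"
    using wf_otm_delta[OF M _ _ scanned_lt_nsyms[OF c] \<delta>] c
    by (simp_all add: wf_config_def)
  have n: "otm_ntapes M \<ge> 4"
    using M by (simp add: wf_otm_def)
  then have "ms ! 1 \<in> set ms"
    using ms by (intro nth_mem) simp
  then have "ms ! 1 \<le> 1"
    using ms by auto
  moreover have "otm_step M \<phi> c = \<lparr> cf_state = q',
      cf_tapes = map (\<lambda>j. if j = 2 then cf_tapes c ! j
        else (cf_tapes c ! j)(cf_heads c ! j := ws ! j)) [0..<otm_ntapes M],
      cf_heads = map (\<lambda>j. cf_heads c ! j + ms ! j) [0..<otm_ntapes M] \<rparr>"
    using assms \<delta> by (simp add: otm_step_def)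
  ultimately show ?thesis
    using that[of "ws ! 1"] n by (simp add: numeral_2_eq_2)
qed

definition query_bounded :: "orcl \<Rightarrow> nat \<Rightarrow> config \<Rightarrow> bool" where
  "query_bounded \<phi> k c \<longleftrightarrow> cf_heads c ! 1 \<le> int k \<and> (\<forall>i\<ge>int k. (cf_tapes c ! 1) i = 0) \<and>
     length (tape_word (cf_tapes c ! 2)) \<le> size_fun \<phi> k"

lemma query_bounded_init_config:
  assumes "wf_otm M"
  shows "query_bounded \<phi> 0 (init_config M a)"
proof -
  have "otm_ntapes M \<ge> 4"
    using assms by (simp add: wf_otm_def)
  then show ?thesis
    using tape_word_length_le[of "\<lambda>_. 0" 0]
    by (simp add: query_bounded_def init_config_def nth_Cons numeral_eq_Suc)
qed

lemma query_bounded_Suc: "query_bounded \<phi> k c \<Longrightarrow> query_bounded \<phi> (Suc k) c"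
  using monoD[OF mono_size_fun, of k "Suc k" \<phi>] by (force simp: query_bounded_def)

lemma query_bounded_otm_step:
  assumes M: "wf_otm M" and c: "wf_config M c" and b: "query_bounded \<phi> k c"
  shows "query_bounded \<phi> (Suc k) (otm_step M \<phi> c)"
proof -
  consider "cf_state c = otm_halt M" | "cf_state c = otm_query M"
    | "cf_state c \<noteq> otm_halt M" "cf_state c \<noteq> otm_query M"
    by blast
  then show ?thesis
  proof cases
    case 1
    then show ?thesis using query_bounded_Suc[OF b] by (simp add: otm_step_def)
  next
    case 2
    have "length (tape_word (cf_tapes c ! 1)) \<le> k"
      using b by (intro tape_word_length_le) (simp add: query_bounded_def)
    then have "length (\<phi> (tape_word (cf_tapes c ! 1))) \<le> size_fun \<phi> (Suc k)"
      using length_le_size_fun le_SucI by blast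
    moreover have "otm_ntapes M \<ge> 4" "otm_query M \<noteq> otm_halt M"
      using M by (simp_all add: wf_otm_def)
    ultimately show ?thesis
      using 2 b c
      by (auto simp: otm_step_def query_bounded_def wf_config_def tape_word_put_word)
  next
    case 3
    then obtain w where "cf_tapes (otm_step M \<phi> c) ! 1 = (cf_tapes c ! 1)(cf_heads c ! 1 := w)"
      and "cf_heads (otm_step M \<phi> c) ! 1 \<le> cf_heads c ! 1 + 1"
      and "cf_tapes (otm_step M \<phi> c) ! 2 = cf_tapes c ! 2"
      using otm_step_regular[OF M c] by blast
    then show ?thesis
      using query_bounded_Suc[OF b] b by (auto simp: query_bounded_def)
  qed
qed

lemma otm_run_invariants:
  "wf_otm M \<Longrightarrow> wf_config M (otm_run M \<phi> a k) \<and> query_bounded \<phi> k (otm_run M \<phi> a k)"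
  by (induction k)
    (simp_all add: otm_run_def wf_config_init_config query_bounded_init_config
      wf_config_otm_step query_bounded_otm_step)

lemma answer_length_le_size_fun:
  "wf_otm M \<Longrightarrow> length (tape_word (cf_tapes (otm_run M \<phi> a k) ! 2)) \<le> size_fun \<phi> k"
  using otm_run_invariants[of M \<phi> a k] by (simp add: query_bounded_def)

lemma mono_length_rev: "mono (length_rev M \<phi> a)"
  by (rule monoI, erule dec_induct) (auto intro: le_trans)

lemma length_rev_Suc_le:
  "wf_otm M \<Longrightarrow> length_rev M \<phi> a (Suc n) \<le> max (length_rev M \<phi> a n) (size_fun \<phi> (Suc n))"
  using answer_length_le_size_fun[of M \<phi> a "Suc n"] by auto

fun revision_bound :: "(nat \<Rightarrow> nat) \<Rightarrow> (nat \<Rightarrow> nat) \<Rightarrow> nat \<Rightarrow> nat \<Rightarrow> nat" where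
  "revision_bound t l n 0 = n"
| "revision_bound t l n (Suc i) = revision_bound t l n i + l (t (revision_bound t l n i) + 1)"

lemma mono_revision_bound: "mono (revision_bound t l n)"
  by (rule monoI, erule dec_induct) (auto intro: le_trans)

lemma length_rev_le_revision_bound:
  assumes M: "wf_otm M" and t: "step_count M t" "mono t"
    and time: "enat n \<le> otm_time M \<phi> a"
  shows "length_rev M \<phi> a n \<le>
    revision_bound t (size_fun \<phi>) (length a) (card (length_rev M \<phi> a ` {..n}) - 1)"
  using time
proof (induction n)
  case 0
  then show ?case by simp
next
  case (Suc n)
  let ?o = "length_rev M \<phi> a"
  let ?Q = "revision_bound t (size_fun \<phi>) (length a)"
  define c where "c = card (?o ` {..n})"
  have time_n: "enat n \<le> otm_time M \<phi> a"
    using Suc.prems by (meson enat_ord_simps(1) le_SucI order_trans order_refl)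
  have IH: "?o n \<le> ?Q (c - 1)"
    using Suc.IH[OF time_n] by (simp add: c_def)
  have image_Suc: "?o ` {..Suc n} = insert (?o (Suc n)) (?o ` {..n})"
    by (auto simp: atMost_Suc)
  have o_mono: "?o x \<le> ?o n" if "x \<le> n" for x
    using monoD[OF mono_length_rev that] .
  show ?case
  proof (cases "?o (Suc n) \<le> ?o n")
    case True
    moreover have "?o n \<le> ?o (Suc n)"
      by (rule monoD[OF mono_length_rev]) simp
    ultimately have "?o (Suc n) = ?o n"
      by linarith
    then have "?o ` {..Suc n} = ?o ` {..n}" and "?o (Suc n) \<le> ?Q (c - 1)"
      using image_Suc IH by (simp_all del: length_rev.simps)
    then show ?thesis
      by (simp add: c_def del: length_rev.simps)
  next
    case False
    then have "?o (Suc n) \<notin> ?o ` {..n}"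
      using o_mono by (metis atMost_iff imageE)
    then have card_Suc: "card (?o ` {..Suc n}) - 1 = Suc (c - 1)"
      unfolding image_Suc c_def by (simp add: card_gt_0_iff del: length_rev.simps)
    have "n \<le> t (?o n)"
      using t(1) time_n by (simp add: step_count_def)
    also have "\<dots> \<le> t (?Q (c - 1))"
      using IH t(2) by (rule monoD[rotated])
    finally have "Suc n \<le> t (?Q (c - 1)) + 1"
      by simp
    have "?o (Suc n) \<le> size_fun \<phi> (Suc n)"
      using False length_rev_Suc_le[OF M, of \<phi> a n] by linarith
    also have "\<dots> \<le> size_fun \<phi> (t (?Q (c - 1)) + 1)"
      using \<open>Suc n \<le> t (?Q (c - 1)) + 1\<close> by (rule monoD[OF mono_size_fun])
    also have "\<dots> \<le> ?Q (Suc (c - 1))"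
      by simp
    finally show ?thesis
      unfolding card_Suc .
  qed
qed

lemma otm_time_le_revision_bound:
  assumes M: "wf_otm M" and t: "step_count M t" "mono t"
    and revisions: "finite (range (length_rev M \<phi> a))" "card (range (length_rev M \<phi> a)) \<le> N"
    and time: "otm_time M \<phi> a = enat m"
  shows "m \<le> t (revision_bound t (size_fun \<phi>) (length a) N)"
proof -
  let ?o = "length_rev M \<phi> a"
  let ?Q = "revision_bound t (size_fun \<phi>) (length a)"
  have "card (?o ` {..m}) \<le> card (range ?o)"
    using revisions(1) by (intro card_mono) auto
  then have "card (?o ` {..m}) - 1 \<le> N"
    using revisions(2) by linarith
  have "m \<le> t (?o m)"
    using t(1) time by (simp add: step_count_def)
  also have "\<dots> \<le> t (?Q (card (?o ` {..m}) - 1))"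
    using length_rev_le_revision_bound[OF M t] time by (intro monoD[OF t(2)]) simp
  also have "\<dots> \<le> t (?Q N)"
    using \<open>card (?o ` {..m}) - 1 \<le> N\<close> by (intro monoD[OF t(2)] monoD[OF mono_revision_bound])
  finally show ?thesis .
qed

lemma sopoly_const: "sopoly (\<lambda>l n. c)"
  using const_poly[of "[:c:]"] by simp

lemma sopoly_poly_comp: "sopoly P \<Longrightarrow> sopoly (\<lambda>l n. poly q (P l n))"
proof (induction q rule: pCons_induct)
  case 0
  then show ?case using sopoly_const[of 0] by simp
next
  case (pCons a q)
  have "sopoly (\<lambda>l n. a + P l n * poly q (P l n))"
    by (intro sopoly.add sopoly.mult sopoly_const pCons.prems pCons.IH)
  then show ?case by simp
qed

lemma sopoly_revision_bound: "sopoly (\<lambda>l n. revision_bound (poly p) l n i)"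
proof (induction i)
  case 0
  show ?case using const_poly[of "[:0, 1:]"] by simp
next
  case (Suc i)
  have "sopoly (\<lambda>l n. revision_bound (poly p) l n i + l (poly p (revision_bound (poly p) l n i) + 1))"
    by (intro sopoly.add sopoly.app sopoly_poly_comp sopoly_const Suc.IH)
  then show ?case by simp
qed

theorem mainTheorem10:
  fixes F :: "orcl \<Rightarrow> orcl"
  assumes "strongly_poly_time_computable F"
  shows "poly_time_computable F"
proof -
  obtain M p where M: "wf_otm M" and computes: "otm_computes M F"
    and "finite_length_revision M" and step_count: "step_count M (poly p)"
    using assms unfolding strongly_poly_time_computable_def by blast
  then obtain N where revisions:
    "\<And>\<phi> a. finite (range (length_rev M \<phi> a)) \<and> card (range (length_rev M \<phi> a)) \<le> N"
    unfolding finite_length_revision_def by blast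
  define P where "P = (\<lambda>l n. poly p (revision_bound (poly p) l n N))"
  have "sopoly P"
    unfolding P_def by (intro sopoly_poly_comp sopoly_revision_bound)
  moreover have "otm_time M \<phi> a \<le> enat (P (size_fun \<phi>) (length a))" for \<phi> a
  proof -
    obtain m where m: "otm_time M \<phi> a = enat m"
      using computes unfolding otm_computes_def by (metis not_infinity_eq)
    then show ?thesis
      using otm_time_le_revision_bound[OF M step_count mono_poly_nat _ _ m] revisions
      by (simp add: P_def)
  qed
  ultimately show ?thesis
    unfolding poly_time_computable_def using M computes by blast
qed

end
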